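(* Let $q$ be a query, let $\pi_q$ be a finite ranked list of documents, and for each $d\in\pi_q$ let $\lambda(d|\pi_q)\in\mathbb{R}$ be a fixed weight, $r(d)\in\{0,1\}$ a fixed relevance judgment, and $k(d)$ the position of $d$ in the logged ranked list for $q$. Let $U$ be a finite set of users with a probability distribution $P(\cdot|q)$ on $U$, and for $u\in U$ write $p(d,u)=P(e(d)=1|k(d),u)$. Let $N_q$ be a finite nonempty collection of logged sessions for $q$, each session being a pair $(\vec c,u)$ with a fixed user $u\in U$; within each session the examinations $e(d)$, $d\in\pi_q$, are Bernoulli with $P(e(d)=1)=p(d,u)$, all examinations across documents and sessions are mutually independent, and clicks are $c(d)=e(d)\,r(d)$. Assume $p(d,u)>0$ for every $d$ with $r(d)=1$ and every user $u$ appearing in $N_q$. Define $$\hat{l}_{straight}(S|q,N_q)=\frac{1}{|N_q|}\sum_{(\vec c,u)\in N_q}\sum_{d\in\pi_q}\frac{\lambda(d|\pi_q)\,c(d)}{p(d,u)},\qquad \hat{l}_{user\text{-}aware}(S|q,N_q)=\frac{1}{|N_q|}\sum_{(\vec c,u)\in N_q}\sum_{d\in\pi_q}\frac{\lambda(d|\pi_q)\,c(d)}{\sum_{u'\in U}p(d,u')P(u'|q)}$$ (a summand with $c(d)=0$ being taken as $0$). Suppose that for all $d\in\pi_q$, $$\sum_{u\in U}p(d,u)P(u|q)\;\ge\;\frac{1}{|N_q|}\sum_{(\vec c,u)\in N_q}p(d,u).$$ Then $\mathbb{V}\big[\hat{l}_{user\text{-}aware}(S|q,N_q)\big]\le\mathbb{V}\big[\hat{l}_{straight}(S|q,N_q)\big]$,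 where the variances are over the examinations with the users of the sessions fixed.
   Context: Setting: unbiased learning to rank with a per-user position-based examination model and the examination hypothesis (a document is clicked iff it is examined and relevant). $S$ denotes the ranking model producing $\pi_q$; it enters only through the fixed weights $\lambda(d|\pi_q)$. The "straightforward" estimator uses each session's own user's examination probability as propensity; the "user-aware" estimator uses the $P(\cdot|q)$-weighted average examination probability. *)

theory Defs
  imports "HOL-Probability.Probability"
begin

text \<open>Documents of the ranked list rk (a distinct list of type 'd), sessions indexed
by a finite set N of session identifiers of type 's, each with a fixed user usr s.
The examination probability of document d for user u is
p d u = theta (kpos d) u = P(e(d)=1 | k(d), u).
An outcome of all examinations is a function e :: 'd \<times> 's \<Rightarrow> bool, e (d,s) being the
examination of d in session s.\<close>

definition exam_pmf ::
  "'d list \<Rightarrow> 's set \<Rightarrow> ('s \<Rightarrow> 'u) \<Rightarrow> ('d \<Rightarrow> 'u \<Rightarrow> real) \<Rightarrow> ('d \<times> 's \<Rightarrow> bool) pmf" where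
  "exam_pmf rk N usr p =
     Pi_pmf (set rk \<times> N) False (\<lambda>(d, s). bernoulli_pmf (p d (usr s)))"

definition click :: "('d \<Rightarrow> real) \<Rightarrow> ('d \<times> 's \<Rightarrow> bool) \<Rightarrow> 'd \<Rightarrow> 's \<Rightarrow> real" where
  "click r e d s = (if e (d, s) then 1 else 0) * r d"

definition ipw_term :: "real \<Rightarrow> real \<Rightarrow> real \<Rightarrow> real" where
  "ipw_term lam c prop = (if c = 0 then 0 else lam * c / prop)"

definition l_straight ::
  "'d list \<Rightarrow> 's set \<Rightarrow> ('s \<Rightarrow> 'u) \<Rightarrow> ('d \<Rightarrow> 'u \<Rightarrow> real) \<Rightarrow> ('d \<Rightarrow> real) \<Rightarrow> ('d \<Rightarrow> real)
     \<Rightarrow> ('d \<times> 's \<Rightarrow> bool) \<Rightarrow> real" where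
  "l_straight rk N usr p lam r e =
     (1 / real (card N)) * (\<Sum>s\<in>N. \<Sum>d\<in>set rk. ipw_term (lam d) (click r e d s) (p d (usr s)))"

definition l_user_aware ::
  "'d list \<Rightarrow> 's set \<Rightarrow> 'u set \<Rightarrow> ('u \<Rightarrow> real) \<Rightarrow> ('d \<Rightarrow> 'u \<Rightarrow> real) \<Rightarrow> ('d \<Rightarrow> real) \<Rightarrow> ('d \<Rightarrow> real)
     \<Rightarrow> ('d \<times> 's \<Rightarrow> bool) \<Rightarrow> real" where
  "l_user_aware rk N U Pu p lam r e =
     (1 / real (card N)) * (\<Sum>s\<in>N. \<Sum>d\<in>set rk.
        ipw_term (lam d) (click r e d s) (\<Sum>u'\<in>U. p d u' * Pu u'))"

end

theory Submission imports Defs begin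

text \<open>Both estimators are linear in the independent examination indicators, so their
variances are sums of squared weights times Bernoulli variances. For a relevant document the
weights differ only in the propensity: the session's own p = p(d, u) for the straightforward
estimator, the P(u|q)-average Q over all users for the user-aware one. The claim thus reduces,
per document, to \<open>\<Sum> p (1 - p) / Q\<^sup>2 \<le> \<Sum> (1 - p) / p\<close>; by the hypothesis Q dominates the
session mean m of the p's, and at Q = m this is Jensen's inequality for the convex function
\<open>f(p) = (1 - p) / p - p (1 - p) / m\<^sup>2\<close>, which vanishes at m.\<close>

lemma expectation_Pi_pmf_bernoulli_pair:
  fixes q :: "'i \<Rightarrow> real"
  assumes "finite A" and "i \<in> A" and "j \<in> A" and "\<forall>k\<in>A. 0 \<le> q k \<and> q k \<le> 1"
  shows "measure_pmf.expectation (Pi_pmf A False (\<lambda>k. bernoulli_pmf (q k)))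
           (\<lambda>e. of_bool (e i) * of_bool (e j)) = (if i = j then q i else q i * q j)"
proof -
  define B where "B = (\<lambda>k. if k = i \<or> k = j then {True} else UNIV)"
  have "(\<lambda>e. of_bool (e i) * of_bool (e j) :: real) = indicator (Pi A B)"
    using assms(2,3) by (auto simp: B_def indicator_def Pi_def fun_eq_iff)
  then have "measure_pmf.expectation (Pi_pmf A False (\<lambda>k. bernoulli_pmf (q k)))
               (\<lambda>e. of_bool (e i) * of_bool (e j))
             = (\<Prod>k\<in>A. measure_pmf.prob (bernoulli_pmf (q k)) (B k))"
    using measure_Pi_pmf_Pi[OF assms(1)] by simp
  also have "\<dots> = (\<Prod>k\<in>A. if k \<in> {i, j} then q k else 1)"
    using assms(4) by (intro prod.cong) (auto simp: B_def measure_pmf_single)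
  also have "\<dots> = (\<Prod>k\<in>{i, j}. q k)"
    using assms(1-3) by (intro prod.mono_neutral_cong_right) auto
  finally show ?thesis
    by simp
qed

lemma variance_Pi_pmf_bernoulli_linear:
  fixes q a :: "'i \<Rightarrow> real"
  assumes fin: "finite A" and q01: "\<forall>i\<in>A. 0 \<le> q i \<and> q i \<le> 1"
  shows "measure_pmf.variance (Pi_pmf A False (\<lambda>i. bernoulli_pmf (q i)))
           (\<lambda>e. \<Sum>i\<in>A. a i * of_bool (e i)) = (\<Sum>i\<in>A. (a i)\<^sup>2 * (q i * (1 - q i)))"
proof -
  define M where "M = Pi_pmf A False (\<lambda>i. bernoulli_pmf (q i))"
  define L where "L = (\<lambda>e. \<Sum>i\<in>A. a i * of_bool (e i) :: real)"
  have "finite (set_pmf M)"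
    unfolding M_def using fin by (subst set_Pi_pmf) (auto intro!: finite_PiE_dflt)
  then have int: "integrable M f" for f :: "_ \<Rightarrow> real"
    by (rule integrable_measure_pmf_finite)
  have pair: "measure_pmf.expectation M (\<lambda>e. of_bool (e i) * of_bool (e j))
      = (if i = j then q i else q i * q j)" if "i \<in> A" "j \<in> A" for i j
    unfolding M_def using expectation_Pi_pmf_bernoulli_pair[OF fin that q01] .
  have mean: "measure_pmf.expectation M L = (\<Sum>i\<in>A. a i * q i)"
    using pair[of i i for i] by (simp add: L_def int flip: of_bool_conj)
  have "(\<lambda>e. (L e)\<^sup>2) = (\<lambda>e. \<Sum>i\<in>A. \<Sum>j\<in>A. a i * a j * (of_bool (e i) * of_bool (e j)))"
    by (auto simp: L_def power2_eq_square sum_product fun_eq_iff intro!: sum.cong)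
  then have second_moment: "measure_pmf.expectation M (\<lambda>e. (L e)\<^sup>2)
      = (\<Sum>i\<in>A. \<Sum>j\<in>A. a i * a j * (if i = j then q i else q i * q j))"
    by (simp add: int pair)
  have "measure_pmf.variance M L
      = measure_pmf.expectation M (\<lambda>e. (L e)\<^sup>2) - (measure_pmf.expectation M L)\<^sup>2"
    by (rule measure_pmf.variance_eq) (auto intro: int)
  also have "\<dots> = (\<Sum>i\<in>A. \<Sum>j\<in>A. a i * a j * (if i = j then q i else q i * q j) - a i * q i * (a j * q j))"
    unfolding mean second_moment by (simp add: power2_eq_square sum_product sum_subtractf)
  also have "\<dots> = (\<Sum>i\<in>A. \<Sum>j\<in>A. if i = j then (a i)\<^sup>2 * (q i * (1 - q i)) else 0)"
    by (intro sum.cong refl) (auto simp: algebra_simps power2_eq_square)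
  finally show ?thesis
    using fin by (simp add: M_def L_def)
qed

lemma sum_inverse_propensity_ge_at_mean:
  fixes x :: "'s \<Rightarrow> real"
  assumes fin: "finite N" and x_pos: "\<forall>s\<in>N. 0 < x s"
    and m_mean: "m = (\<Sum>s\<in>N. x s) / card N" and m_pos: "0 < m"
  shows "(\<Sum>s\<in>N. x s * (1 - x s) / m\<^sup>2) \<le> (\<Sum>s\<in>N. (1 - x s) / x s)"
proof -
  define slope where "slope = 2 * (m - 1) / m\<^sup>2"
  have tangent: "slope * (x s - m) \<le> (1 - x s) / x s - x s * (1 - x s) / m\<^sup>2" if "s \<in> N" for s
  proof -
    have "x s > 0"
      using x_pos that by blast
    then have "(1 - x s) / x s - x s * (1 - x s) / m\<^sup>2 - slope * (x s - m)
        = (x s - m)\<^sup>2 / (x s * m\<^sup>2) + (x s - m)\<^sup>2 / m\<^sup>2"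
      using m_pos by (simp add: slope_def field_simps power2_eq_square)
    also have "\<dots> \<ge> 0"
      using \<open>x s > 0\<close> by simp
    finally show ?thesis
      by simp
  qed
  have "N \<noteq> {}"
    using m_pos m_mean by auto
  then have "0 = (\<Sum>s\<in>N. slope * (x s - m))"
    using fin by (simp add: m_mean sum_subtractf sum_distrib_left[symmetric])
  also have "\<dots> \<le> (\<Sum>s\<in>N. (1 - x s) / x s - x s * (1 - x s) / m\<^sup>2)"
    using tangent by (rule sum_mono)
  finally show ?thesis
    by (simp add: sum_subtractf)
qed

lemma sum_variance_mean_propensity_le:
  fixes x :: "'s \<Rightarrow> real"
  assumes fin: "finite N" and ne: "N \<noteq> {}" and x01: "\<forall>s\<in>N. 0 < x s \<and> x s \<le> 1"
    and Q_ge: "(1 / real (card N)) * (\<Sum>s\<in>N. x s) \<le> Q"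
  shows "(\<Sum>s\<in>N. (c / Q)\<^sup>2 * (x s * (1 - x s))) \<le> (\<Sum>s\<in>N. (c / x s)\<^sup>2 * (x s * (1 - x s)))"
proof -
  define m where "m = (\<Sum>s\<in>N. x s) / card N"
  obtain s0 where "s0 \<in> N"
    using ne by blast
  then have "0 < (\<Sum>s\<in>N. x s)"
    using fin x01 by (intro sum_pos2[of N s0]) auto
  then have m_pos: "0 < m"
    using fin ne by (simp add: m_def card_gt_0_iff)
  have "m \<le> Q"
    using Q_ge by (simp add: m_def)
  have "(\<Sum>s\<in>N. (c / Q)\<^sup>2 * (x s * (1 - x s))) = c\<^sup>2 * (\<Sum>s\<in>N. x s * (1 - x s) / Q\<^sup>2)"
    by (simp add: sum_distrib_left power_divide)
  also have "\<dots> \<le> c\<^sup>2 * (\<Sum>s\<in>N. x s * (1 - x s) / m\<^sup>2)"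
    using x01 m_pos \<open>m \<le> Q\<close>
    by (intro mult_left_mono sum_mono divide_left_mono power_mono) auto
  also have "\<dots> \<le> c\<^sup>2 * (\<Sum>s\<in>N. (1 - x s) / x s)"
    using x01 m_pos by (intro mult_left_mono sum_inverse_propensity_ge_at_mean[OF fin _ m_def]) auto
  also have "\<dots> = (\<Sum>s\<in>N. (c / x s)\<^sup>2 * (x s * (1 - x s)))"
    using x01 by (auto simp: sum_distrib_left power2_eq_square intro!: sum.cong)
  finally show ?thesis .
qed

definition ipw_weight :: "('d \<Rightarrow> real) \<Rightarrow> ('d \<Rightarrow> real) \<Rightarrow> ('d \<Rightarrow> 's \<Rightarrow> real) \<Rightarrow> 'd \<times> 's \<Rightarrow> real"
  where "ipw_weight r lam P = (\<lambda>(d, s). if r d = 1 then lam d / P d s else 0)"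

lemma scaled_ipw_sum_eq_linear:
  assumes "\<forall>d\<in>D. r d \<in> {0, 1}"
  shows "c * (\<Sum>s\<in>N. \<Sum>d\<in>D. ipw_term (lam d) (click r e d s) (P d s))
           = (\<Sum>i\<in>D \<times> N. c * ipw_weight r lam P i * of_bool (e i))"
proof -
  have "c * (\<Sum>s\<in>N. \<Sum>d\<in>D. ipw_term (lam d) (click r e d s) (P d s))
      = c * (\<Sum>(d, s)\<in>D \<times> N. ipw_term (lam d) (click r e d s) (P d s))"
    by (subst sum.swap) (simp add: sum.cartesian_product)
  also have "\<dots> = (\<Sum>i\<in>D \<times> N. c * ipw_weight r lam P i * of_bool (e i))"
    using assms unfolding sum_distrib_left
    by (intro sum.cong refl) (auto simp: ipw_term_def click_def ipw_weight_def)
  finally show ?thesis .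
qed

theorem theorem3p3:
  fixes rk :: "'d list" and kpos :: "'d \<Rightarrow> nat" and theta :: "nat \<Rightarrow> 'u \<Rightarrow> real"
    and lam :: "'d \<Rightarrow> real" and r :: "'d \<Rightarrow> real"
    and U :: "'u set" and Pu :: "'u \<Rightarrow> real"
    and N :: "'s set" and usr :: "'s \<Rightarrow> 'u"
  defines "p \<equiv> (\<lambda>d u. theta (kpos d) u)"
  assumes distinct_pi: "distinct rk"
    and r01: "\<forall>d\<in>set rk. r d \<in> {0, 1}"
    and finU: "finite U"
    and Pu_nonneg: "\<forall>u\<in>U. Pu u \<ge> 0"
    and Pu_sum: "(\<Sum>u\<in>U. Pu u) = 1"
    and p_prob: "\<forall>d\<in>set rk. \<forall>u\<in>U. 0 \<le> p d u \<and> p d u \<le> 1"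
    and finN: "finite N" and neN: "N \<noteq> {}"
    and usrU: "\<forall>s\<in>N. usr s \<in> U"
    and p_pos: "\<forall>d\<in>set rk. \<forall>s\<in>N. r d = 1 \<longrightarrow> p d (usr s) > 0"
    and cond: "\<forall>d\<in>set rk. (\<Sum>u\<in>U. p d u * Pu u) \<ge> (1 / real (card N)) * (\<Sum>s\<in>N. p d (usr s))"
  shows "measure_pmf.variance (exam_pmf rk N usr p) (l_user_aware rk N U Pu p lam r)
           \<le> measure_pmf.variance (exam_pmf rk N usr p) (l_straight rk N usr p lam r)"
proof -
  define c where "c = 1 / real (card N)"
  define q where "q = (\<lambda>(d, s). p d (usr s))"
  define PS where "PS = (\<lambda>d s. p d (usr s))"
  define PU where "PU = (\<lambda>d (s::'s). \<Sum>u\<in>U. p d u * Pu u)"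
  have q01: "\<forall>i\<in>set rk \<times> N. 0 \<le> q i \<and> q i \<le> 1"
    using p_prob usrU by (auto simp: q_def)
  have fin: "finite (set rk \<times> N)"
    using finN by simp
  have exam: "exam_pmf rk N usr p = Pi_pmf (set rk \<times> N) False (\<lambda>i. bernoulli_pmf (q i))"
    by (simp add: exam_pmf_def q_def case_prod_unfold)
  have straight: "l_straight rk N usr p lam r
      = (\<lambda>e. \<Sum>i\<in>set rk \<times> N. c * ipw_weight r lam PS i * of_bool (e i))"
    unfolding l_straight_def c_def PS_def by (intro ext scaled_ipw_sum_eq_linear r01)
  have user_aware: "l_user_aware rk N U Pu p lam r
      = (\<lambda>e. \<Sum>i\<in>set rk \<times> N. c * ipw_weight r lam PU i * of_bool (e i))"
    unfolding l_user_aware_def c_def PU_def by (intro ext scaled_ipw_sum_eq_linear r01)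
  have "(\<Sum>i\<in>set rk \<times> N. (c * ipw_weight r lam PU i)\<^sup>2 * (q i * (1 - q i)))
      \<le> (\<Sum>i\<in>set rk \<times> N. (c * ipw_weight r lam PS i)\<^sup>2 * (q i * (1 - q i)))"
    unfolding sum.cartesian_product'
  proof (rule sum_mono)
    fix d assume d: "d \<in> set rk"
    show "(\<Sum>s\<in>N. (c * ipw_weight r lam PU (d, s))\<^sup>2 * (q (d, s) * (1 - q (d, s))))
        \<le> (\<Sum>s\<in>N. (c * ipw_weight r lam PS (d, s))\<^sup>2 * (q (d, s) * (1 - q (d, s))))"
    proof (cases "r d = 1")
      case True
      have "\<forall>s\<in>N. 0 < p d (usr s) \<and> p d (usr s) \<le> 1"
        using p_pos p_prob usrU d True by auto
      from sum_variance_mean_propensity_le[OF finN neN this, of "\<Sum>u\<in>U. p d u * Pu u" "c * lam d"]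
      show ?thesis
        using cond d True by (simp add: ipw_weight_def PS_def PU_def q_def)
    qed (simp add: ipw_weight_def)
  qed
  then show ?thesis
    unfolding exam straight user_aware variance_Pi_pmf_bernoulli_linear[OF fin q01] .
qed

end
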